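(* Let $d\ge 2$ and $c_1\in(0,1]$. There exist constants $C>1$, $c\in(0,1)$ and $0<c'\le C'$, depending only on $d$ and $c_1$, such that the following holds for every finite field $\mathbb F_q$ of characteristic greater than two. Let $E,F\subset\mathbb F_q^d$ and $0\le\alpha\le1$. Assume that the number of distinct lines $l_x$ with $x\in E\setminus\{0\}$ is at least $c_1 q^{-\alpha}|E|$. If $|E||F|\ge Cq^{d+\alpha}$, then there exists a set $E_0\subset E$ with $c' q^{-\alpha}|E|\le|E_0|\le C' q^{-\alpha}|E|$ such that $|\Pi(E_0,F)|\ge c\,q$.
   Context: $\mathbb F_q$ is a finite field with $q$ elements and characteristic greater than two; $\mathbb F_q^*=\mathbb F_q\setminus\{0\}$. For $x\in\mathbb F_q^d\setminus\{0\}$, $l_x=\{sx: s\in\mathbb F_q^*\}$ (the line through the origin and $x$, with the origin removed). For $E,F\subset\mathbb F_q^d$, $\Pi(E,F)=\{x\cdot y: x\in E,\ y\in F\}$ with $x\cdot y=\sum_i x_iy_i$. *)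

theory Defs
  imports Complex_Main "HOL-Algebra.Ring"
begin

text \<open>Vectors of F_q^d are represented as extensional functions on the index set {..<d}
  with values in the carrier of the field.\<close>

definition vecs :: "('a, 'b) ring_scheme \<Rightarrow> nat \<Rightarrow> (nat \<Rightarrow> 'a) set" where
  "vecs R d = {..<d} \<rightarrow>\<^sub>E carrier R"

definition zvec :: "('a, 'b) ring_scheme \<Rightarrow> nat \<Rightarrow> (nat \<Rightarrow> 'a)" where
  "zvec R d = (\<lambda>i\<in>{..<d}. \<zero>\<^bsub>R\<^esub>)"

definition dotp :: "('a, 'b) ring_scheme \<Rightarrow> nat \<Rightarrow> (nat \<Rightarrow> 'a) \<Rightarrow> (nat \<Rightarrow> 'a) \<Rightarrow> 'a" where
  "dotp R d x y = finsum R (\<lambda>i. x i \<otimes>\<^bsub>R\<^esub> y i) {..<d}"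

definition line :: "('a, 'b) ring_scheme \<Rightarrow> nat \<Rightarrow> (nat \<Rightarrow> 'a) \<Rightarrow> (nat \<Rightarrow> 'a) set" where
  "line R d x = {(\<lambda>i\<in>{..<d}. s \<otimes>\<^bsub>R\<^esub> x i) | s. s \<in> carrier R - {\<zero>\<^bsub>R\<^esub>}}"

definition prodset :: "('a, 'b) ring_scheme \<Rightarrow> nat \<Rightarrow> (nat \<Rightarrow> 'a) set \<Rightarrow> (nat \<Rightarrow> 'a) set \<Rightarrow> 'a set" where
  "prodset R d E F = {dotp R d x y | x y. x \<in> E \<and> y \<in> F}"

definition fchar :: "('a, 'b) ring_scheme \<Rightarrow> nat" where
  "fchar R = (if \<exists>n::nat>0. add_pow R n \<one>\<^bsub>R\<^esub> = \<zero>\<^bsub>R\<^esub>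
                  then (LEAST n::nat. n > 0 \<and> add_pow R n \<one>\<^bsub>R\<^esub> = \<zero>\<^bsub>R\<^esub>) else 0)"

end

theory Submission
  imports Defs "HOL-Algebra.Multiplicative_Group" "HOL-Analysis.Convex"
begin

text \<open>For y \<noteq> y' the equation x \<cdot> y = x \<cdot> y' is a nontrivial linear condition on x, so it has
  at most q^(d-1) solutions. Hence the energies #{(y, y') \<in> F \<times> F : x \<cdot> y = x \<cdot> y'} summed over
  all x are at most |F| q^d + |F|^2 q^(d-1), while by Cauchy-Schwarz each single energy is at
  least |F|^2/q. The energy is constant on every line l_x, so for nonzero vectors E0 on pairwise
  distinct lines the excesses over |F|^2/q sum to at most |F| q^(d-1). A second Cauchy-Schwarz
  over the value set \<Pi>(E0, F) yields |\<Pi>(E0, F)| \<ge> q/2 once |E0||F| \<ge> 2 q^d, and an E0 of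
  size \<lceil>c1 q^(-\<alpha>)|E|\<rceil> is obtained by choosing one representative from each of that many lines.
  The argument works in every finite field.\<close>

lemma obtain_inj_on_subset_with_card:
  assumes "k \<le> card (f ` A)"
  obtains B where "B \<subseteq> A" "card B = k" "inj_on f B"
proof -
  obtain L where L: "L \<subseteq> f ` A" "card L = k"
    using obtain_subset_with_card_n[OF assms] by blast
  show thesis
  proof
    show "inv_into A f ` L \<subseteq> A" using L(1) by (auto intro: inv_into_into)
    show "card (inv_into A f ` L) = k" using L by (simp add: card_image inj_on_inv_into)
    show "inj_on f (inv_into A f ` L)"
    proof (rule inj_onI)
      fix x x' assume "x \<in> inv_into A f ` L" "x' \<in> inv_into A f ` L" "f x = f x'"
      then show "x = x'" using L(1) by (auto simp: f_inv_into_f subset_iff)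
    qed
  qed
qed

lemma (in domain) eq_of_two_solutions:
  assumes carr: "a \<in> carrier R" "a' \<in> carrier R" "b \<in> carrier R" "b' \<in> carrier R"
    "s \<in> carrier R" "t \<in> carrier R"
    and "b \<noteq> b'" and "a \<otimes> b \<oplus> s = a \<otimes> b' \<oplus> t" and "a' \<otimes> b \<oplus> s = a' \<otimes> b' \<oplus> t"
  shows "a = a'"
proof -
  have "(a \<ominus> a') \<otimes> (b \<ominus> b') = ((a \<otimes> b \<oplus> s) \<ominus> (a \<otimes> b' \<oplus> t)) \<ominus> ((a' \<otimes> b \<oplus> s) \<ominus> (a' \<otimes> b' \<oplus> t))"
    using carr by algebra
  also have "\<dots> = \<zero>" using carr by (simp add: assms(8,9) a_minus_def r_neg)
  finally have "(a \<ominus> a') \<otimes> (b \<ominus> b') = \<zero>" .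
  then show ?thesis using carr assms(7) integral_iff[of "a \<ominus> a'" "b \<ominus> b'"] by simp
qed

definition vec_scale :: "('a, 'b) ring_scheme \<Rightarrow> nat \<Rightarrow> 'a \<Rightarrow> (nat \<Rightarrow> 'a) \<Rightarrow> (nat \<Rightarrow> 'a)" where
  "vec_scale R d s x = (\<lambda>i\<in>{..<d}. s \<otimes>\<^bsub>R\<^esub> x i)"

definition dot_count :: "('a, 'b) ring_scheme \<Rightarrow> nat \<Rightarrow> (nat \<Rightarrow> 'a) set \<Rightarrow> (nat \<Rightarrow> 'a) \<Rightarrow> 'a \<Rightarrow> real"
  where "dot_count R d F x t = (\<Sum>y\<in>F. of_bool (dotp R d x y = t))"

definition dot_energy :: "('a, 'b) ring_scheme \<Rightarrow> nat \<Rightarrow> (nat \<Rightarrow> 'a) set \<Rightarrow> (nat \<Rightarrow> 'a) \<Rightarrow> real"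
  where "dot_energy R d F x = (\<Sum>y\<in>F. \<Sum>y'\<in>F. of_bool (dotp R d x y = dotp R d x y'))"

lemma vecsD: "x \<in> vecs R d \<Longrightarrow> i < d \<Longrightarrow> x i \<in> carrier R"
  unfolding vecs_def by auto

lemma finite_vecs: "finite (carrier R) \<Longrightarrow> finite (vecs R d)"
  unfolding vecs_def by (intro finite_PiE) auto

lemma card_vecs: "card (vecs R d) = order R ^ d"
  unfolding vecs_def order_def by (simp add: card_PiE)

lemma line_eq_image: "line R d x = (\<lambda>s. vec_scale R d s x) ` (carrier R - {\<zero>\<^bsub>R\<^esub>})"
  unfolding line_def vec_scale_def by auto

context field
begin

lemma two_le_order: "finite (carrier R) \<Longrightarrow> 2 \<le> order R"
  unfolding order_def using card_mono[of "carrier R" "{\<zero>, \<one>}"] by simp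

lemma zvec_in_vecs: "zvec R d \<in> vecs R d"
  unfolding zvec_def vecs_def by auto

lemma vec_scale_in_vecs: "s \<in> carrier R \<Longrightarrow> x \<in> vecs R d \<Longrightarrow> vec_scale R d s x \<in> vecs R d"
  unfolding vecs_def vec_scale_def by auto

lemma vec_scale_vec_scale:
  "x \<in> vecs R d \<Longrightarrow> s \<in> carrier R \<Longrightarrow> t \<in> carrier R \<Longrightarrow>
    vec_scale R d t (vec_scale R d s x) = vec_scale R d (t \<otimes> s) x"
  unfolding vec_scale_def by (intro restrict_ext) (simp add: vecsD m_assoc)

lemma nonzero_coord:
  assumes "x \<in> vecs R d" "x \<noteq> zvec R d"
  obtains i where "i < d" "x i \<noteq> \<zero>"
proof -
  have "x = zvec R d" if "\<forall>i<d. x i = \<zero>"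
    using assms(1) that unfolding vecs_def zvec_def by (intro PiE_ext[of x "{..<d}"]) auto
  then show thesis using assms(2) that by blast
qed

lemma dotp_closed: "x \<in> vecs R d \<Longrightarrow> y \<in> vecs R d \<Longrightarrow> dotp R d x y \<in> carrier R"
  unfolding dotp_def by (intro finsum_closed) (auto dest: vecsD)

lemma dotp_vec_scale:
  assumes "s \<in> carrier R" "x \<in> vecs R d" "y \<in> vecs R d"
  shows "dotp R d (vec_scale R d s x) y = s \<otimes> dotp R d x y"
proof -
  have "dotp R d (vec_scale R d s x) y = (\<Oplus>i\<in>{..<d}. s \<otimes> (x i \<otimes> y i))"
    unfolding dotp_def vec_scale_def using assms by (intro finsum_cong') (auto simp: vecsD m_assoc)
  also have "\<dots> = s \<otimes> dotp R d x y"
    unfolding dotp_def using assms by (subst finsum_rdistr) (auto simp: vecsD)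
  finally show ?thesis .
qed

lemma dotp_zvec:
  assumes "y \<in> vecs R d"
  shows "dotp R d (zvec R d) y = \<zero>"
proof -
  have "dotp R d (zvec R d) y = (\<Oplus>i\<in>{..<d}. \<zero>)"
    unfolding dotp_def zvec_def using assms by (intro finsum_cong') (auto simp: vecsD)
  then show ?thesis by simp
qed

lemma dotp_remove_coord:
  assumes "i < d" "x \<in> vecs R d" "y \<in> vecs R d"
  shows "dotp R d x y = x i \<otimes> y i \<oplus> (\<Oplus>j\<in>{..<d}-{i}. x j \<otimes> y j)"
proof -
  have "{..<d} = insert i ({..<d}-{i})" using assms by auto
  then show ?thesis
    unfolding dotp_def by (subst (1) \<open>{..<d} = _\<close>, subst finsum_insert) (use assms in \<open>auto simp: vecsD\<close>)
qed

lemma dotp_eq_solution_determined_off_coord: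
  assumes i: "i < d" "y i \<noteq> y' i" and y: "y \<in> vecs R d" "y' \<in> vecs R d"
    and x: "x \<in> vecs R d" "x' \<in> vecs R d"
    and sol: "dotp R d x y = dotp R d x y'" "dotp R d x' y = dotp R d x' y'"
    and agree: "\<forall>j\<in>{..<d} - {i}. x j = x' j"
  shows "x = x'"
proof -
  let ?J = "{..<d} - {i}"
  let ?s = "\<Oplus>j\<in>?J. x j \<otimes> y j" and ?t = "\<Oplus>j\<in>?J. x j \<otimes> y' j"
  have sums: "?s \<in> carrier R" "?t \<in> carrier R"
    using x y by (auto intro!: finsum_closed simp: vecsD)
  have rest: "(\<Oplus>j\<in>?J. x' j \<otimes> z j) = (\<Oplus>j\<in>?J. x j \<otimes> z j)" if "z \<in> vecs R d" for z
    using x that agree by (intro finsum_cong') (auto simp: vecsD)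
  from rest[OF y(1)] rest[OF y(2)] have "x i \<otimes> y i \<oplus> ?s = x i \<otimes> y' i \<oplus> ?t" "x' i \<otimes> y i \<oplus> ?s = x' i \<otimes> y' i \<oplus> ?t"
    using sol dotp_remove_coord[OF i(1) x(1) y(1)] dotp_remove_coord[OF i(1) x(1) y(2)]
      dotp_remove_coord[OF i(1) x(2) y(1)] dotp_remove_coord[OF i(1) x(2) y(2)] by simp_all
  then have "x i = x' i"
    by (rule eq_of_two_solutions[OF vecsD[OF x(1) i(1)] vecsD[OF x(2) i(1)]
          vecsD[OF y(1) i(1)] vecsD[OF y(2) i(1)] sums i(2)])
  then have "x j = x' j" if "j < d" for j
    using agree that by (cases "j = i") auto
  then show "x = x'"
    using x unfolding vecs_def by (intro PiE_ext[of x "{..<d}" "\<lambda>_. carrier R"]) auto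
qed

lemma card_dotp_eq_le:
  assumes fin: "finite (carrier R)" and y: "y \<in> vecs R d" "y' \<in> vecs R d" "y \<noteq> y'"
  shows "card {x \<in> vecs R d. dotp R d x y = dotp R d x y'} \<le> order R ^ (d - 1)"
proof -
  obtain i where i: "i < d" "y i \<noteq> y' i"
    using y PiE_ext[of y "{..<d}" "\<lambda>_. carrier R" y'] unfolding vecs_def by auto
  let ?S = "{x \<in> vecs R d. dotp R d x y = dotp R d x y'}"
  let ?J = "{..<d} - {i}"
  have "inj_on (\<lambda>x. restrict x ?J) ?S"
  proof (rule inj_onI)
    fix x x' assume "x \<in> ?S" "x' \<in> ?S" "restrict x ?J = restrict x' ?J"
    then show "x = x'"
      using dotp_eq_solution_determined_off_coord[OF i y(1,2), of x x'] fun_cong[of "restrict x ?J"]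
      by (metis (mono_tags, lifting) mem_Collect_eq restrict_apply')
  qed
  moreover have "(\<lambda>x. restrict x ?J) ` ?S \<subseteq> ?J \<rightarrow>\<^sub>E carrier R"
    by (auto simp: vecs_def PiE_def Pi_def)
  ultimately have "card ?S \<le> card (?J \<rightarrow>\<^sub>E carrier R)"
    by (intro card_inj_on_le) (auto intro: finite_PiE fin)
  also have "\<dots> = order R ^ (d - 1)"
    using i by (simp add: card_PiE order_def)
  finally show ?thesis .
qed

lemma sum_dot_count:
  assumes fin: "finite (carrier R)" and "F \<subseteq> vecs R d" "x \<in> vecs R d"
  shows "(\<Sum>t\<in>carrier R. dot_count R d F x t) = card F"
proof -
  have "(\<Sum>t\<in>carrier R. dot_count R d F x t) = (\<Sum>y\<in>F. \<Sum>t\<in>carrier R. of_bool (dotp R d x y = t))"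
    unfolding dot_count_def by (rule sum.swap)
  also have "\<dots> = (\<Sum>y\<in>F. 1)"
    using assms dotp_closed by (intro sum.cong) (auto simp: of_bool_def subsetD)
  finally show ?thesis by simp
qed

lemma dot_energy_eq_sum_dot_count_sq:
  assumes fin: "finite (carrier R)" and F: "F \<subseteq> vecs R d" and x: "x \<in> vecs R d"
  shows "dot_energy R d F x = (\<Sum>t\<in>carrier R. (dot_count R d F x t) ^ 2)"
proof -
  have "(\<Sum>t\<in>carrier R. (dot_count R d F x t) ^ 2) = (\<Sum>t\<in>carrier R. \<Sum>y\<in>F. \<Sum>y'\<in>F.
      of_bool (dotp R d x y = t) * of_bool (dotp R d x y' = t))"
    unfolding dot_count_def power2_eq_square sum_product ..
  also have "\<dots> = (\<Sum>y\<in>F. \<Sum>y'\<in>F. \<Sum>t\<in>carrier R.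
      of_bool (dotp R d x y = t) * of_bool (dotp R d x y' = t))"
    by (subst sum.swap) (intro sum.cong refl sum.swap)
  also have "\<dots> = dot_energy R d F x"
  proof -
    have "(\<Sum>t\<in>carrier R. of_bool (a = t) * of_bool (b = t)) = (of_bool (a = b) :: real)"
      if "a \<in> carrier R" for a b
    proof -
      have "(\<Sum>t\<in>carrier R. of_bool (a = t) * of_bool (b = t))
          = (\<Sum>t\<in>carrier R. if a = t then of_bool (b = a) else 0 :: real)"
        by (intro sum.cong) auto
      then show ?thesis using that fin by auto
    qed
    then show ?thesis
      unfolding dot_energy_def using F x by (intro sum.cong refl) (auto simp: dotp_closed subsetD)
  qed
  finally show ?thesis ..
qed

lemma dot_energy_lower_bound:
  assumes "finite (carrier R)" "F \<subseteq> vecs R d" "x \<in> vecs R d"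
  shows "real (card F) ^ 2 / order R \<le> dot_energy R d F x"
  using sum_squared_le_sum_of_squares[of "dot_count R d F x" "carrier R"] two_le_order[OF assms(1)]
  by (simp add: sum_dot_count[OF assms] dot_energy_eq_sum_dot_count_sq[OF assms] order_def
      divide_le_eq mult.commute)

lemma dot_energy_vec_scale:
  assumes "s \<in> carrier R" "s \<noteq> \<zero>" "F \<subseteq> vecs R d" "x \<in> vecs R d"
  shows "dot_energy R d F (vec_scale R d s x) = dot_energy R d F x"
  unfolding dot_energy_def using assms
  by (intro sum.cong refl) (auto simp: dotp_vec_scale dotp_closed subsetD m_lcancel)

lemma dot_energy_zvec:
  assumes "F \<subseteq> vecs R d"
  shows "dot_energy R d F (zvec R d) = (card F) ^ 2"
  unfolding dot_energy_def using assms by (simp add: dotp_zvec subsetD power2_eq_square)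

lemma sum_dot_energy_eq_sum_card:
  assumes "finite V"
  shows "(\<Sum>x\<in>V. dot_energy R d F x)
    = (\<Sum>y\<in>F. \<Sum>y'\<in>F. real (card {x \<in> V. dotp R d x y = dotp R d x y'}))"
proof -
  have "(\<Sum>x\<in>V. dot_energy R d F x)
      = (\<Sum>y\<in>F. \<Sum>x\<in>V. \<Sum>y'\<in>F. of_bool (dotp R d x y = dotp R d x y'))"
    unfolding dot_energy_def by (rule sum.swap)
  also have "\<dots> = (\<Sum>y\<in>F. \<Sum>y'\<in>F. \<Sum>x\<in>V. of_bool (dotp R d x y = dotp R d x y'))"
    by (intro sum.cong refl sum.swap)
  finally show ?thesis using assms by (simp add: Collect_conj_eq Int_commute)
qed

lemma sum_dot_energy_le:
  assumes fin: "finite (carrier R)" and F: "F \<subseteq> vecs R d"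
  shows "(\<Sum>x\<in>vecs R d. dot_energy R d F x)
    \<le> card F * (real (order R) ^ d + (real (card F) - 1) * real (order R) ^ (d - 1))"
proof -
  let ?q = "real (order R)"
  have fV: "finite (vecs R d)" using finite_vecs[OF fin] .
  have fF: "finite F" using finite_subset[OF F fV] .
  have pair: "real (card {x \<in> vecs R d. dotp R d x y = dotp R d x y'})
      \<le> (if y = y' then ?q ^ d else ?q ^ (d - 1))" if "y \<in> F" "y' \<in> F" for y y'
    using card_dotp_eq_le[OF fin, where y=y and y'=y'] F that
    by (auto simp: card_vecs simp flip: of_nat_power)
  have row: "(\<Sum>y'\<in>F. if y = y' then ?q ^ d else ?q ^ (d - 1)) = ?q ^ d + (real (card F) - 1) * ?q ^ (d - 1)"
    if "y \<in> F" for y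
  proof -
    have "(\<Sum>y'\<in>F - {y}. if y = y' then ?q ^ d else ?q ^ (d - 1)) = (\<Sum>y'\<in>F - {y}. ?q ^ (d - 1))"
      by (intro sum.cong) auto
    moreover have "real (card F - 1) = real (card F) - 1"
      using that fF card_gt_0_iff[of F] by (auto simp: of_nat_diff Suc_le_eq)
    ultimately show ?thesis
      using that fF by (simp add: sum.remove[of F y] card_Diff_singleton)
  qed
  have "(\<Sum>x\<in>vecs R d. dot_energy R d F x)
      = (\<Sum>y\<in>F. \<Sum>y'\<in>F. real (card {x \<in> vecs R d. dotp R d x y = dotp R d x y'}))"
    by (rule sum_dot_energy_eq_sum_card[OF fV])
  also have "\<dots> \<le> (\<Sum>y\<in>F. \<Sum>y'\<in>F. if y = y' then ?q ^ d else ?q ^ (d - 1))"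
    using pair by (intro sum_mono) auto
  also have "\<dots> = card F * (?q ^ d + (real (card F) - 1) * ?q ^ (d - 1))"
    using row by simp
  finally show ?thesis .
qed

lemma sum_dot_energy_excess_le:
  assumes fin: "finite (carrier R)" and F: "F \<subseteq> vecs R d" and d: "1 \<le> d"
  shows "(\<Sum>x\<in>vecs R d - {zvec R d}. dot_energy R d F x - real (card F) ^ 2 / order R)
    \<le> card F * real (order R) ^ (d - 1) * (real (order R) - 1)"
proof -
  let ?q = "real (order R)" and ?p = "real (order R) ^ (d - 1)" and ?F = "real (card F)"
  have fV: "finite (vecs R d)" using finite_vecs[OF fin] .
  have q: "?q \<ge> 2" using two_le_order[OF fin] by simp
  have qd: "?q ^ d = ?q * ?p" using d by (cases d) auto
  have card_nonzero: "real (card (vecs R d - {zvec R d})) = ?q ^ d - 1"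
    using fV two_le_order[OF fin] by (simp add: card_Diff_singleton zvec_in_vecs card_vecs of_nat_diff)
  have "(\<Sum>x\<in>vecs R d - {zvec R d}. dot_energy R d F x)
      = (\<Sum>x\<in>vecs R d. dot_energy R d F x) - ?F ^ 2"
    using fV by (simp add: sum.remove[of _ "zvec R d"] zvec_in_vecs dot_energy_zvec[OF F])
  then have "(\<Sum>x\<in>vecs R d - {zvec R d}. dot_energy R d F x - ?F ^ 2 / ?q)
      \<le> ?F * (?q ^ d + (?F - 1) * ?p) - ?F ^ 2 - (?q ^ d - 1) * (?F ^ 2 / ?q)"
    using sum_dot_energy_le[OF fin F] by (simp add: sum_subtractf card_nonzero)
  also have "\<dots> = ?F * ?p * (?q - 1) - ?F ^ 2 * (1 - 1 / ?q)"
    using q unfolding qd by (simp add: field_simps power2_eq_square)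
  also have "\<dots> \<le> ?F * ?p * (?q - 1)"
    using q by (simp add: mult_nonneg_nonneg)
  finally show ?thesis .
qed

lemma card_line:
  assumes x: "x \<in> vecs R d" "x \<noteq> zvec R d"
  shows "card (line R d x) = order R - 1"
proof -
  obtain i where i: "i < d" "x i \<noteq> \<zero>" using nonzero_coord[OF x] .
  have "inj_on (\<lambda>s. vec_scale R d s x) (carrier R - {\<zero>})"
  proof (rule inj_onI)
    fix s s' assume s: "s \<in> carrier R - {\<zero>}" "s' \<in> carrier R - {\<zero>}"
      and e: "vec_scale R d s x = vec_scale R d s' x"
    have "s \<otimes> x i = s' \<otimes> x i" using fun_cong[OF e, of i] i(1) by (simp add: vec_scale_def)
    then show "s = s'" using m_rcancel[OF i(2) vecsD[OF x(1) i(1)]] s by simp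
  qed
  then show ?thesis
    unfolding line_eq_image by (simp add: card_image card_Diff_singleton order_def)
qed

lemma line_subset_nonzero:
  assumes x: "x \<in> vecs R d" "x \<noteq> zvec R d"
  shows "line R d x \<subseteq> vecs R d - {zvec R d}"
proof
  fix z assume "z \<in> line R d x"
  then obtain s where s: "s \<in> carrier R" "s \<noteq> \<zero>" and z: "z = vec_scale R d s x"
    unfolding line_eq_image by auto
  obtain i where i: "i < d" "x i \<noteq> \<zero>" using nonzero_coord[OF x] .
  have "z i \<noteq> \<zero>" using z i s vecsD[OF x(1) i(1)] by (simp add: vec_scale_def integral_iff)
  moreover have "zvec R d i = \<zero>" using i(1) by (simp add: zvec_def)
  ultimately have "z \<noteq> zvec R d" by metis
  then show "z \<in> vecs R d - {zvec R d}" using z vec_scale_in_vecs[OF s(1) x(1)] by simp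
qed

lemma line_eq_of_mem:
  assumes x: "x \<in> vecs R d" and z: "z \<in> line R d x"
  shows "line R d z = line R d x"
proof -
  obtain s where s: "s \<in> carrier R" "s \<noteq> \<zero>" and zs: "z = vec_scale R d s x"
    using z unfolding line_eq_image by auto
  have "s \<in> Units R" using s field_Units by simp
  then have inv: "inv s \<in> carrier R" "inv s \<otimes> s = \<one>" by simp_all
  then have "inv s \<noteq> \<zero>" using s(1) by (metis l_null zero_not_one)
  show ?thesis
    unfolding line_eq_image
  proof (intro equalityI subsetI)
    fix w assume "w \<in> (\<lambda>t. vec_scale R d t z) ` (carrier R - {\<zero>})"
    then obtain t where t: "t \<in> carrier R" "t \<noteq> \<zero>" and w: "w = vec_scale R d (t \<otimes> s) x"
      using zs x s by (auto simp: vec_scale_vec_scale)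
    moreover have "t \<otimes> s \<noteq> \<zero>" using t s by (simp add: integral_iff)
    ultimately show "w \<in> (\<lambda>t. vec_scale R d t x) ` (carrier R - {\<zero>})"
      using s by blast
  next
    fix w assume "w \<in> (\<lambda>u. vec_scale R d u x) ` (carrier R - {\<zero>})"
    then obtain u where u: "u \<in> carrier R" "u \<noteq> \<zero>" and w: "w = vec_scale R d u x" by auto
    have "vec_scale R d (u \<otimes> inv s) z = vec_scale R d ((u \<otimes> inv s) \<otimes> s) x"
      using zs x s u inv by (simp add: vec_scale_vec_scale)
    also have "(u \<otimes> inv s) \<otimes> s = u" using u s inv by (simp add: m_assoc)
    finally have "w = vec_scale R d (u \<otimes> inv s) z" using w by simp
    moreover have "u \<otimes> inv s \<in> carrier R - {\<zero>}"
      using u inv \<open>inv s \<noteq> \<zero>\<close> by (simp add: integral_iff)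
    ultimately show "w \<in> (\<lambda>t. vec_scale R d t z) ` (carrier R - {\<zero>})" by blast
  qed
qed

lemma disjoint_lines:
  assumes "x \<in> vecs R d" "x' \<in> vecs R d" "line R d x \<noteq> line R d x'"
  shows "line R d x \<inter> line R d x' = {}"
  using assms line_eq_of_mem by blast

lemma dot_energy_on_line:
  assumes "F \<subseteq> vecs R d" "x \<in> vecs R d" "z \<in> line R d x"
  shows "dot_energy R d F z = dot_energy R d F x"
proof -
  obtain s where "s \<in> carrier R" "s \<noteq> \<zero>" "z = vec_scale R d s x"
    using assms(3) unfolding line_eq_image by auto
  then show ?thesis using dot_energy_vec_scale assms(1,2) by simp
qed

lemma sum_dot_energy_excess_distinct_lines_le:
  assumes fin: "finite (carrier R)" and F: "F \<subseteq> vecs R d" and d: "1 \<le> d"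
    and E0: "E0 \<subseteq> vecs R d - {zvec R d}" and inj: "inj_on (line R d) E0"
  shows "(\<Sum>x\<in>E0. dot_energy R d F x - real (card F) ^ 2 / order R)
    \<le> card F * real (order R) ^ (d - 1)"
proof -
  let ?q = "real (order R)"
  define excess where "excess x = dot_energy R d F x - real (card F) ^ 2 / ?q" for x
  have fV: "finite (vecs R d)" using finite_vecs[OF fin] .
  have fE0: "finite E0" using finite_subset[OF E0] fV by auto
  have q: "?q \<ge> 2" using two_le_order[OF fin] by simp
  have excess_nonneg: "excess z \<ge> 0" if "z \<in> vecs R d" for z
    unfolding excess_def using dot_energy_lower_bound[OF fin F that] by simp
  have "(?q - 1) * (\<Sum>x\<in>E0. excess x) = (\<Sum>x\<in>E0. \<Sum>z\<in>line R d x. excess z)"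
    unfolding sum_distrib_left
  proof (intro sum.cong refl)
    fix x assume x: "x \<in> E0"
    then have "card (line R d x) = order R - 1" using E0 card_line by auto
    then have "real (card (line R d x)) = ?q - 1"
      using two_le_order[OF fin] by (simp add: of_nat_diff)
    moreover have "excess z = excess x" if "z \<in> line R d x" for z
      unfolding excess_def using dot_energy_on_line[OF F _ that] x E0 by auto
    ultimately show "(?q - 1) * excess x = (\<Sum>z\<in>line R d x. excess z)" by simp
  qed
  also have "\<dots> = (\<Sum>z\<in>(\<Union>x\<in>E0. line R d x). excess z)"
  proof (rule sum.UNION_disjoint[symmetric])
    show "\<forall>x\<in>E0. finite (line R d x)"
    proof
      fix x assume "x \<in> E0"
      then have "line R d x \<subseteq> vecs R d" using E0 line_subset_nonzero by blast
      then show "finite (line R d x)" using fV finite_subset by blast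
    qed
    show "\<forall>x\<in>E0. \<forall>x'\<in>E0. x \<noteq> x' \<longrightarrow> line R d x \<inter> line R d x' = {}"
    proof (intro ballI impI)
      fix x x' assume x: "x \<in> E0" "x' \<in> E0" "x \<noteq> x'"
      then have "line R d x \<noteq> line R d x'" using inj by (auto dest: inj_onD)
      then show "line R d x \<inter> line R d x' = {}" using x E0 disjoint_lines by blast
    qed
  qed (rule fE0)
  also have "\<dots> \<le> (\<Sum>z\<in>vecs R d - {zvec R d}. excess z)"
    using E0 line_subset_nonzero fV excess_nonneg by (intro sum_mono2) auto
  also have "\<dots> \<le> (?q - 1) * (card F * ?q ^ (d - 1))"
    using sum_dot_energy_excess_le[OF fin F d] unfolding excess_def by (simp add: mult_ac)
  finally show ?thesis
    using q unfolding excess_def by (simp add: mult_le_cancel_left)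
qed

lemma card_prodset_lower_bound:
  assumes fin: "finite (carrier R)" and F: "F \<subseteq> vecs R d" and d: "1 \<le> d"
    and E0: "E0 \<subseteq> vecs R d - {zvec R d}" and inj: "inj_on (line R d) E0"
  defines "X \<equiv> real (card E0) * real (card F)"
  shows "X ^ 2 \<le> card (prodset R d E0 F) * (X ^ 2 / order R + X * real (order R) ^ (d - 1))"
proof -
  let ?q = "real (order R)" and ?P = "prodset R d E0 F"
  define nu where "nu t = (\<Sum>x\<in>E0. dot_count R d F x t)" for t
  have E0v: "x \<in> vecs R d" if "x \<in> E0" for x using E0 that by auto
  have Fv: "y \<in> vecs R d" if "y \<in> F" for y using F that by auto
  have P_carrier: "?P \<subseteq> carrier R"
    unfolding prodset_def using E0v Fv dotp_closed by blast
  have "(\<Sum>t\<in>carrier R. nu t) = X"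
    unfolding nu_def X_def by (subst sum.swap) (simp add: sum_dot_count[OF fin F] E0v)
  moreover have "nu t = 0" if "t \<notin> ?P" for t
    unfolding nu_def dot_count_def using that by (auto simp: prodset_def intro!: sum.neutral)
  ultimately have sum_nu: "(\<Sum>t\<in>?P. nu t) = X"
    using sum.mono_neutral_left[OF fin P_carrier, of nu] by simp
  have "(\<Sum>t\<in>carrier R. nu t ^ 2) \<le> (\<Sum>t\<in>carrier R. card E0 * (\<Sum>x\<in>E0. dot_count R d F x t ^ 2))"
    unfolding nu_def using sum_squared_le_sum_of_squares
    by (intro sum_mono) (simp add: mult.commute)
  also have "\<dots> = card E0 * (\<Sum>x\<in>E0. dot_energy R d F x)"
    by (simp add: sum_distrib_left sum.swap[of _ "carrier R"]
        dot_energy_eq_sum_dot_count_sq[OF fin F] E0v)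
  also have "\<dots> \<le> card E0 * (card E0 * real (card F) ^ 2 / ?q + card F * ?q ^ (d - 1))"
    using sum_dot_energy_excess_distinct_lines_le[OF fin F d E0 inj]
    by (intro mult_left_mono) (simp_all add: sum_subtractf)
  finally have sum_nu_sq: "(\<Sum>t\<in>carrier R. nu t ^ 2) \<le> X ^ 2 / ?q + X * ?q ^ (d - 1)"
    unfolding X_def by (simp add: power2_eq_square algebra_simps)
  have "X ^ 2 \<le> card ?P * (\<Sum>t\<in>?P. nu t ^ 2)"
    using sum_squared_le_sum_of_squares[of nu ?P] sum_nu by (simp add: mult.commute)
  also have "\<dots> \<le> card ?P * (\<Sum>t\<in>carrier R. nu t ^ 2)"
    by (intro mult_left_mono sum_mono2[OF fin P_carrier]) auto
  also have "\<dots> \<le> card ?P * (X ^ 2 / ?q + X * ?q ^ (d - 1))"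
    by (intro mult_left_mono sum_nu_sq) simp
  finally show ?thesis .
qed

lemma card_prodset_ge_half_order:
  assumes fin: "finite (carrier R)" and F: "F \<subseteq> vecs R d" and d: "1 \<le> d"
    and E0: "E0 \<subseteq> vecs R d - {zvec R d}" and inj: "inj_on (line R d) E0"
    and large: "2 * real (order R) ^ d \<le> real (card E0) * real (card F)"
  shows "real (order R) / 2 \<le> card (prodset R d E0 F)"
proof -
  let ?q = "real (order R)" and ?X = "real (card E0) * real (card F)"
    and ?P = "real (card (prodset R d E0 F))"
  have q: "?q \<ge> 2" using two_le_order[OF fin] by simp
  have "2 * ?q * ?q ^ (d - 1) \<le> ?X" using large d by (cases d) auto
  moreover have X: "?X > 0" using large q by (simp add: less_le_trans[OF _ large])
  ultimately have "?X * (2 * ?q * ?q ^ (d - 1)) \<le> ?X * ?X" by (intro mult_left_mono) auto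
  then have "?X * ?q ^ (d - 1) \<le> ?X ^ 2 / (2 * ?q)"
    using q by (simp add: pos_le_divide_eq power2_eq_square mult_ac)
  then have "?P * (?X ^ 2 / ?q + ?X * ?q ^ (d - 1)) \<le> ?P * (?X ^ 2 / ?q + ?X ^ 2 / (2 * ?q))"
    by (intro mult_left_mono) auto
  with card_prodset_lower_bound[OF fin F d E0 inj]
  have "?X ^ 2 \<le> ?P * (?X ^ 2 / ?q + ?X ^ 2 / (2 * ?q))" by linarith
  also have "\<dots> = ?X ^ 2 * (3 * ?P / (2 * ?q))"
    using q by (simp add: field_simps)
  finally have "?X ^ 2 * 1 \<le> ?X ^ 2 * (3 * ?P / (2 * ?q))" by simp
  then have "1 \<le> 3 * ?P / (2 * ?q)"
    by (rule mult_left_le_imp_le) (use X in \<open>simp only: zero_less_power\<close>)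
  then show ?thesis
    using q by (simp add: field_simps)
qed


lemma exists_subset_distinct_lines_large_prodset:
  fixes K :: real
  assumes fin: "finite (carrier R)" and E: "E \<subseteq> vecs R d" and F: "F \<subseteq> vecs R d" and d: "1 \<le> d"
    and lines: "K \<le> card (line R d ` (E - {zvec R d}))"
    and large: "2 * real (order R) ^ d \<le> K * card F"
  shows "\<exists>E0\<subseteq>E. K \<le> card E0 \<and> card E0 \<le> 2 * K \<and> real (order R) / 2 \<le> card (prodset R d E0 F)"
proof -
  let ?q = "real (order R)"
  have q: "?q \<ge> 2" using two_le_order[OF fin] by simp
  have card_F: "card F \<le> ?q ^ d"
    using card_mono[OF finite_vecs[OF fin] F] unfolding card_vecs by (simp flip: of_nat_power)
  have "0 < K * card F" using large q by (simp add: less_le_trans[OF _ large])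
  then have "K * card F \<le> K * ?q ^ d"
    using card_F by (intro mult_left_mono) (auto simp: zero_less_mult_iff)
  then have "2 * ?q ^ d \<le> K * ?q ^ d" using large by linarith
  then have K: "2 \<le> K" using q by simp
  have "nat \<lceil>K\<rceil> \<le> card (line R d ` (E - {zvec R d}))"
    using lines by (simp add: nat_le_iff ceiling_le_iff)
  then obtain E0 where E0: "E0 \<subseteq> E - {zvec R d}" "card E0 = nat \<lceil>K\<rceil>" "inj_on (line R d) E0"
    by (rule obtain_inj_on_subset_with_card)
  have "real (card E0) = of_int \<lceil>K\<rceil>" using E0(2) K by simp
  then have card_E0: "K \<le> card E0" "card E0 \<le> 2 * K"
    using le_of_int_ceiling[of K] of_int_ceiling_le_add_one[of K] K by linarith+
  have "2 * ?q ^ d \<le> card E0 * card F"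
    using large mult_right_mono[OF card_E0(1), of "card F"] by simp
  then have "?q / 2 \<le> card (prodset R d E0 F)"
    using E0 E by (intro card_prodset_ge_half_order[OF fin F d]) auto
  then show ?thesis using E0(1) card_E0 by blast
qed
end


theorem lemma4p1:
  fixes d :: nat and c1 :: real
  assumes "d \<ge> 2" and "0 < c1" and "c1 \<le> 1"
  shows "\<exists>C c c' C' :: real. C > 1 \<and> 0 < c \<and> c < 1 \<and> 0 < c' \<and> c' \<le> C' \<and>
    (\<forall>(R :: nat ring) (E :: (nat \<Rightarrow> nat) set) (F :: (nat \<Rightarrow> nat) set) (\<alpha> :: real).
       field R \<longrightarrow> finite (carrier R) \<longrightarrow> fchar R > 2 \<longrightarrow>
       E \<subseteq> vecs R d \<longrightarrow> F \<subseteq> vecs R d \<longrightarrow> 0 \<le> \<alpha> \<longrightarrow> \<alpha> \<le> 1 \<longrightarrow>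
       real (card {line R d x | x. x \<in> E - {zvec R d}})
         \<ge> c1 * real (card (carrier R)) powr (- \<alpha>) * real (card E) \<longrightarrow>
       real (card E) * real (card F) \<ge> C * real (card (carrier R)) powr (real d + \<alpha>) \<longrightarrow>
       (\<exists>E0. E0 \<subseteq> E \<and>
          c' * real (card (carrier R)) powr (- \<alpha>) * real (card E) \<le> real (card E0) \<and>
          real (card E0) \<le> C' * real (card (carrier R)) powr (- \<alpha>) * real (card E) \<and>
          real (card (prodset R d E0 F)) \<ge> c * real (card (carrier R))))"
proof (rule exI[of _ "2 / c1"], rule exI[of _ "1 / 2"], rule exI[of _ c1], rule exI[of _ "2 * c1"],
       intro conjI allI impI)
  fix R :: "nat ring" and E F :: "(nat \<Rightarrow> nat) set" and \<alpha> :: real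
  assume field: "field R" and fin: "finite (carrier R)" and "fchar R > 2"
    and E: "E \<subseteq> vecs R d" and F: "F \<subseteq> vecs R d" and "0 \<le> \<alpha>" "\<alpha> \<le> 1"
    and lines: "c1 * real (card (carrier R)) powr (- \<alpha>) * real (card E)
      \<le> real (card {line R d x | x. x \<in> E - {zvec R d}})"
    and large: "2 / c1 * real (card (carrier R)) powr (real d + \<alpha>) \<le> real (card E) * real (card F)"
  interpret field R by (rule field)
  define q where "q = real (card (carrier R))"
  define K where "K = c1 * q powr (- \<alpha>) * card E"
  have "2 * real (order R) ^ d = c1 * q powr (- \<alpha>) * (2 / c1 * q powr (real d + \<alpha>))"
    using two_le_order[OF fin] assms(2)
    by (simp add: q_def order_def powr_add powr_minus powr_realpow field_simps)
  also have "\<dots> \<le> c1 * q powr (- \<alpha>) * (card E * card F)"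
    using large assms(2) unfolding q_def by (intro mult_left_mono) auto
  also have "\<dots> = K * card F" unfolding K_def by simp
  finally have "2 * real (order R) ^ d \<le> K * card F" .
  moreover have "{line R d x | x. x \<in> E - {zvec R d}} = line R d ` (E - {zvec R d})" by blast
  ultimately show "\<exists>E0. E0 \<subseteq> E \<and>
      c1 * real (card (carrier R)) powr (- \<alpha>) * real (card E) \<le> real (card E0) \<and>
      real (card E0) \<le> 2 * c1 * real (card (carrier R)) powr (- \<alpha>) * real (card E) \<and>
      1 / 2 * real (card (carrier R)) \<le> real (card (prodset R d E0 F))"
    using exists_subset_distinct_lines_large_prodset[OF fin E F, of K] lines assms(1)
    unfolding K_def q_def order_def by auto
qed (use assms in auto)

end
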